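(* Let $\mathcal{A}=\{A_1,\dots,A_m\}$ be a bimodal collection of pairwise disjoint nonempty subsets of a finite abelian group $G$, with internal difference groups $H_1,\dots,H_m$, labelled so that $|A_i|<|H_i|$ exactly for $i=1,\dots,r$, where $r\ge2$. Let $D=(a_1+H_1)\setminus A_1$, where $a_1+H_1$ is the coset of $H_1$ containing $A_1$, and suppose $\mathcal{A}$ is in canonical position, i.e. $D$ is a subgroup of $G$. Then $(H_1+H_2+\dots+H_r)\setminus D\subseteq A_1\cup A_2\cup\dots\cup A_m$.
   Context: $G$ is written additively. The internal difference group $H_i$ of $A_i$ is the subgroup generated by all $x-y$ with $x,y\in A_i$; $A_i$ lies in a single coset of $H_i$ and $|A_i|\le|H_i|$. A collection $\{A_1,\dots,A_m\}$ of pairwise disjoint subsets of $G$ is bimodal if for every $i$ and every $\delta\in G\setminus\{0\}$, the number $N_i(\delta)$ of pairs $(a,b)$ with $a\in A_i$, $b\in A_j$ for some $j\neq i$, and $a-b=\delta$, satisfies $N_i(\delta)\in\{0,|A_i|\}$. (For such collections with $r\ge2$ the set $D$ equals $(a_i+H_i)\setminus A_i$ for every $i\le r$ and is a coset of a subgroup; canonical position means the collection has been translated so that $D$ is a subgroup.) *)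

theory Defs
  imports Main
begin

definition is_subgroup :: "'a::ab_group_add set \<Rightarrow> bool" where
  "is_subgroup H \<longleftrightarrow> 0 \<in> H \<and> (\<forall>x\<in>H. \<forall>y\<in>H. x - y \<in> H)"

definition gen_subgroup :: "'a::ab_group_add set \<Rightarrow> 'a set" where
  "gen_subgroup S = \<Inter>{H. is_subgroup H \<and> S \<subseteq> H}"

definition diff_group :: "'a::ab_group_add set \<Rightarrow> 'a set" where
  "diff_group A = gen_subgroup {x - y | x y. x \<in> A \<and> y \<in> A}"

definition N_count :: "(nat \<Rightarrow> 'a::ab_group_add set) \<Rightarrow> nat \<Rightarrow> nat \<Rightarrow> 'a \<Rightarrow> nat" where
  "N_count A m i \<delta> = card {(a, b). a \<in> A i \<and> (\<exists>j\<in>{1..m}. j \<noteq> i \<and> b \<in> A j) \<and> a - b = \<delta>}"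

definition bimodal :: "(nat \<Rightarrow> 'a::ab_group_add set) \<Rightarrow> nat \<Rightarrow> bool" where
  "bimodal A m \<longleftrightarrow> (\<forall>i\<in>{1..m}. \<forall>\<delta>. \<delta> \<noteq> 0 \<longrightarrow>
      N_count A m i \<delta> = 0 \<or> N_count A m i \<delta> = card (A i))"

fun subgroup_sum :: "(nat \<Rightarrow> 'a::ab_group_add set) \<Rightarrow> nat \<Rightarrow> 'a set" where
  "subgroup_sum H 0 = {0}"
| "subgroup_sum H (Suc n) = {x + y | x y. x \<in> subgroup_sum H n \<and> y \<in> H (Suc n)}"

end

theory Submission
  imports Defs
begin

text \<open>Call the points outside \<open>A 1 \<union> \<dots> \<union> A m\<close> uncovered. Bimodality makes \<open>H i\<close> a group
  of periods of the union of the blocks other than \<open>A i\<close>; hence \<open>a + H i\<close> (\<open>a \<in> A i\<close>)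
  meets the covered points only in \<open>A i\<close>, and every uncovered point outside \<open>a + H i\<close> has an
  entirely uncovered \<open>H i\<close>-coset. In canonical position \<open>D\<close> is the uncovered part of \<open>H 1\<close>.
  For each \<open>k \<le> r\<close>, the uncovered points of \<open>b + H k\<close> (\<open>b \<in> A k\<close>), which exist because
  \<open>\<bar>A k\<bar> < \<bar>H k\<bar>\<close>, are played against the periods of \<open>D\<close>, \<open>H 1\<close> and \<open>H k\<close> to show
  \<open>A k \<subseteq> H k\<close> and that \<open>D\<close> is also the uncovered part of \<open>H k\<close>. Finally, if \<open>x = s + h\<close>
  with \<open>s \<in> H 1 + \<dots> + H (k - 1)\<close> and \<open>h \<in> H k\<close> is uncovered but \<open>x \<notin> H k\<close>, then \<open>s\<close> is
  uncovered, so \<open>s \<in> D \<subseteq> H k\<close> by induction, a contradiction.\<close>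

lemma is_subgroup_zero: "is_subgroup H \<Longrightarrow> 0 \<in> H"
  by (simp add: is_subgroup_def)

lemma is_subgroup_diff: "is_subgroup H \<Longrightarrow> x \<in> H \<Longrightarrow> y \<in> H \<Longrightarrow> x - y \<in> H"
  by (simp add: is_subgroup_def)

lemma is_subgroup_uminus: "is_subgroup H \<Longrightarrow> x \<in> H \<Longrightarrow> - x \<in> H"
  using is_subgroup_diff[of H 0 x] is_subgroup_zero[of H] by simp

lemma is_subgroup_add: "is_subgroup H \<Longrightarrow> x \<in> H \<Longrightarrow> y \<in> H \<Longrightarrow> x + y \<in> H"
  using is_subgroup_diff[of H x "- y"] is_subgroup_uminus[of H y] by simp

lemma is_subgroup_add_left_iff: "is_subgroup H \<Longrightarrow> y \<in> H \<Longrightarrow> x + y \<in> H \<longleftrightarrow> x \<in> H"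
  using is_subgroup_add[of H "x + y" "- y"] is_subgroup_uminus[of H y] is_subgroup_add[of H x y]
  by auto

lemma is_subgroup_diff_left_iff: "is_subgroup H \<Longrightarrow> y \<in> H \<Longrightarrow> x - y \<in> H \<longleftrightarrow> x \<in> H"
  using is_subgroup_add_left_iff[of H "- y" x] is_subgroup_uminus[of H y] by simp

lemma mem_coset_iff: "is_subgroup H \<Longrightarrow> x \<in> (+) a ` H \<longleftrightarrow> x - a \<in> H"
  by (auto simp: image_iff intro: bexI[of _ "x - a"])

lemma is_subgroup_gen_subgroup: "is_subgroup (gen_subgroup S)"
  unfolding is_subgroup_def gen_subgroup_def by auto

lemma gen_subgroup_least: "is_subgroup T \<Longrightarrow> S \<subseteq> T \<Longrightarrow> gen_subgroup S \<subseteq> T"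
  unfolding gen_subgroup_def by auto

lemma is_subgroup_diff_group: "is_subgroup (diff_group A)"
  unfolding diff_group_def by (rule is_subgroup_gen_subgroup)

lemma diff_mem_diff_group: "x \<in> A \<Longrightarrow> y \<in> A \<Longrightarrow> x - y \<in> diff_group A"
  unfolding diff_group_def gen_subgroup_def by blast

definition stabilizer :: "'a::ab_group_add set \<Rightarrow> 'a set" where
  "stabilizer R = {t. \<forall>y\<in>R. y + t \<in> R}"

lemma is_subgroup_stabilizer:
  fixes R :: "'a::ab_group_add set"
  assumes "finite R"
  shows "is_subgroup (stabilizer R)"
  unfolding is_subgroup_def
proof (intro conjI ballI)
  show "0 \<in> stabilizer R"
    by (simp add: stabilizer_def)
next
  fix t s assume t: "t \<in> stabilizer R" and s: "s \<in> stabilizer R"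
  have "(\<lambda>y. y + s) ` R \<subseteq> R"
    using s by (auto simp: stabilizer_def)
  moreover have "inj_on (\<lambda>y. y + s) R"
    by (simp add: inj_on_def)
  ultimately have onto: "(\<lambda>y. y + s) ` R = R"
    by (rule endo_inj_surj[OF assms])
  show "t - s \<in> stabilizer R"
    unfolding stabilizer_def
  proof
    show "\<forall>y\<in>R. y + (t - s) \<in> R"
    proof
      fix y assume "y \<in> R"
      then obtain z where "z \<in> R" "y = z + s"
        using onto by blast
      then show "y + (t - s) \<in> R"
        using t by (simp add: stabilizer_def)
    qed
  qed
qed

lemma diff_group_subset_stabilizer:
  fixes R A :: "'a::ab_group_add set"
  assumes "finite R" and "\<And>a a' y. a \<in> A \<Longrightarrow> a' \<in> A \<Longrightarrow> y \<in> R \<Longrightarrow> y + (a' - a) \<in> R"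
  shows "diff_group A \<subseteq> stabilizer R"
  unfolding diff_group_def
proof (rule gen_subgroup_least[OF is_subgroup_stabilizer[OF assms(1)]])
  show "{x - y |x y. x \<in> A \<and> y \<in> A} \<subseteq> stabilizer R"
    using assms(2) unfolding stabilizer_def by blast
qed

lemma N_count_pos:
  fixes A :: "nat \<Rightarrow> 'a::{ab_group_add, finite} set"
  assumes "a \<in> A i" "j \<in> {1..m}" "j \<noteq> i" "b \<in> A j"
  shows "N_count A m i (a - b) \<noteq> 0"
proof -
  have "(a, b) \<in> {(a', b'). a' \<in> A i \<and> (\<exists>j\<in>{1..m}. j \<noteq> i \<and> b' \<in> A j) \<and> a' - b' = a - b}"
    using assms by auto
  then show ?thesis
    unfolding N_count_def by (auto simp: card_eq_0_iff)
qed

text \<open>Distinct pairs counted by \<^term>\<open>N_count A m i \<delta>\<close> have distinct first entries, so the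
  count equals \<^term>\<open>card (A i)\<close> exactly when every element of \<^term>\<open>A i\<close> has a partner.\<close>

lemma N_count_full_partner:
  fixes A :: "nat \<Rightarrow> 'a::{ab_group_add, finite} set"
  assumes full: "N_count A m i \<delta> = card (A i)" and a: "a \<in> A i"
  shows "\<exists>j\<in>{1..m}. j \<noteq> i \<and> a - \<delta> \<in> A j"
proof -
  define P where "P = {(a, b). a \<in> A i \<and> (\<exists>j\<in>{1..m}. j \<noteq> i \<and> b \<in> A j) \<and> a - b = \<delta>}"
  have "inj_on fst P"
    unfolding inj_on_def P_def by auto
  then have "card (fst ` P) = card (A i)"
    using full by (simp add: card_image N_count_def P_def)
  moreover have "fst ` P \<subseteq> A i"
    unfolding P_def by auto
  ultimately have "fst ` P = A i"
    by (simp add: card_subset_eq)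
  with a obtain b where "(a, b) \<in> P"
    by force
  then show ?thesis
    unfolding P_def by (auto simp: algebra_simps)
qed

lemma bimodal_shift:
  fixes A :: "nat \<Rightarrow> 'a::{ab_group_add, finite} set"
  assumes "bimodal A m" "i \<in> {1..m}" "a \<in> A i" "a' \<in> A i"
    and "j \<in> {1..m}" "j \<noteq> i" "y \<in> A j" "y \<noteq> a"
  shows "\<exists>j'\<in>{1..m}. j' \<noteq> i \<and> y + (a' - a) \<in> A j'"
proof -
  have "N_count A m i (a - y) = card (A i)"
    using assms N_count_pos[of a A i j m y] unfolding bimodal_def by force
  from N_count_full_partner[OF this \<open>a' \<in> A i\<close>] show ?thesis
    by (simp add: algebra_simps)
qed

locale bimodal_collection =
  fixes A :: "nat \<Rightarrow> 'a::{ab_group_add, finite} set" and m :: nat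
  assumes disjoint: "\<And>i j. i \<in> {1..m} \<Longrightarrow> j \<in> {1..m} \<Longrightarrow> i \<noteq> j \<Longrightarrow> A i \<inter> A j = {}"
    and bimodal: "bimodal A m"
begin

abbreviation H :: "nat \<Rightarrow> 'a set" where
  "H i \<equiv> diff_group (A i)"

definition covered :: "'a set" where
  "covered = (\<Union>i\<in>{1..m}. A i)"

lemma block_subset_covered: "i \<in> {1..m} \<Longrightarrow> A i \<subseteq> covered"
  unfolding covered_def by blast

lemma covered_minus_block_iff:
  assumes i: "i \<in> {1..m}"
  shows "y \<in> covered - A i \<longleftrightarrow> (\<exists>j\<in>{1..m}. j \<noteq> i \<and> y \<in> A j)"
proof
  assume "y \<in> covered - A i"
  then show "\<exists>j\<in>{1..m}. j \<noteq> i \<and> y \<in> A j"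
    unfolding covered_def by fastforce
next
  assume "\<exists>j\<in>{1..m}. j \<noteq> i \<and> y \<in> A j"
  then obtain j where j: "j \<in> {1..m}" "j \<noteq> i" "y \<in> A j"
    by blast
  then have "y \<notin> A i"
    using disjoint[OF i j(1)] by blast
  with j show "y \<in> covered - A i"
    unfolding covered_def by blast
qed

lemma H_subset_stabilizer:
  assumes i: "i \<in> {1..m}"
  shows "H i \<subseteq> stabilizer (covered - A i)"
proof (rule diff_group_subset_stabilizer)
  fix a a' y assume a: "a \<in> A i" and a': "a' \<in> A i" and y: "y \<in> covered - A i"
  then obtain j where "j \<in> {1..m}" "j \<noteq> i" "y \<in> A j"
    using covered_minus_block_iff[OF i] by blast
  moreover have "y \<noteq> a"
    using a y by blast
  ultimately show "y + (a' - a) \<in> covered - A i"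
    using bimodal_shift[OF bimodal i a a'] covered_minus_block_iff[OF i] by blast
qed simp

lemma covered_minus_block_translate_iff:
  assumes i: "i \<in> {1..m}" and h: "h \<in> H i"
  shows "y + h \<in> covered - A i \<longleftrightarrow> y \<in> covered - A i"
proof
  have "- h \<in> stabilizer (covered - A i)"
    using H_subset_stabilizer[OF i] is_subgroup_uminus[OF is_subgroup_diff_group h] by blast
  then have "y + h + - h \<in> covered - A i" if "y + h \<in> covered - A i"
    using that unfolding stabilizer_def by blast
  then show "y \<in> covered - A i" if "y + h \<in> covered - A i"
    using that by simp
next
  show "y + h \<in> covered - A i" if "y \<in> covered - A i"
    using that h H_subset_stabilizer[OF i] unfolding stabilizer_def by blast
qed

lemma mem_block_if_coset:
  assumes i: "i \<in> {1..m}" and a: "a \<in> A i" and "y - a \<in> H i" and "y \<in> covered"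
  shows "y \<in> A i"
proof (rule ccontr)
  assume "y \<notin> A i"
  moreover have "a - y \<in> H i"
    using is_subgroup_uminus[OF is_subgroup_diff_group \<open>y - a \<in> H i\<close>] by simp
  ultimately have "y + (a - y) \<in> covered - A i"
    using covered_minus_block_translate_iff[OF i] \<open>y \<in> covered\<close> by blast
  then show False
    using a by simp
qed

lemma uncovered_add_H:
  assumes i: "i \<in> {1..m}" and a: "a \<in> A i"
    and y: "y \<notin> covered" "y - a \<notin> H i" and h: "h \<in> H i"
  shows "y + h \<notin> covered"
proof
  assume "y + h \<in> covered"
  moreover have "y + h \<notin> covered - A i"
    using covered_minus_block_translate_iff[OF i h] y(1) by blast
  ultimately have "(y - a) + h \<in> H i"
    using diff_mem_diff_group[of "y + h" "A i" a] a by (simp add: algebra_simps)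
  then show False
    using y(2) is_subgroup_add_left_iff[OF is_subgroup_diff_group h] by blast
qed

lemma coset_has_uncovered:
  assumes i: "i \<in> {1..m}" and b: "b \<in> A i" and card: "card (A i) < card (H i)"
  shows "\<exists>e. e - b \<in> H i \<and> e \<notin> covered"
proof -
  have "\<not> (+) b ` H i \<subseteq> A i"
  proof
    assume "(+) b ` H i \<subseteq> A i"
    then have "card ((+) b ` H i) \<le> card (A i)"
      by (intro card_mono) auto
    moreover have "card ((+) b ` H i) = card (H i)"
      by (simp add: card_image)
    ultimately show False
      using card by simp
  qed
  then obtain t where t: "t \<in> H i" "b + t \<notin> A i"
    by auto
  then have "b + t \<notin> covered"
    using mem_block_if_coset[OF i b, of "b + t"] by auto
  with t show ?thesis
    by (intro exI[of _ "b + t"]) simp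
qed

end

locale canonical_bimodal = bimodal_collection +
  fixes a1 :: 'a
  assumes first_block: "1 \<le> m" and a1: "a1 \<in> A 1"
    and canonical: "is_subgroup ((+) a1 ` H 1 - A 1)"
begin

definition D :: "'a set" where
  "D = (+) a1 ` H 1 - A 1"

lemma a1_covered: "a1 \<in> covered"
  using a1 first_block block_subset_covered by auto

lemma is_subgroup_D: "is_subgroup D"
  using canonical unfolding D_def .

lemma zero_in_D: "0 \<in> D"
  using is_subgroup_D by (rule is_subgroup_zero)

lemma a1_in_H1: "a1 \<in> H 1"
proof -
  have "0 - a1 \<in> H 1"
    using zero_in_D mem_coset_iff[OF is_subgroup_diff_group] unfolding D_def by blast
  then show ?thesis
    using is_subgroup_uminus[OF is_subgroup_diff_group] by fastforce
qed

lemma coset_a1_eq_H1: "(+) a1 ` H 1 = H 1"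
  using mem_coset_iff[OF is_subgroup_diff_group]
    is_subgroup_diff_left_iff[OF is_subgroup_diff_group a1_in_H1] by blast

lemma A1_subset_H1: "A 1 \<subseteq> H 1"
proof
  fix x assume "x \<in> A 1"
  then have "x \<in> (+) a1 ` H 1"
    using a1 diff_mem_diff_group mem_coset_iff[OF is_subgroup_diff_group] by blast
  then show "x \<in> H 1"
    using coset_a1_eq_H1 by simp
qed

lemma H1_inter_covered: "H 1 \<inter> covered = A 1"
proof -
  have "x \<in> A 1" if "x \<in> H 1" "x \<in> covered" for x
    using mem_block_if_coset[of 1 a1 x] first_block a1 that
      is_subgroup_diff[OF is_subgroup_diff_group _ a1_in_H1] by simp
  then show ?thesis
    using A1_subset_H1 block_subset_covered[of 1] first_block by auto
qed

lemma D_eq: "D = H 1 - covered"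
  using coset_a1_eq_H1 H1_inter_covered unfolding D_def by blast

lemma uncovered_add_H1:
  assumes "y \<notin> covered" "y \<notin> H 1" "h \<in> H 1"
  shows "y + h \<notin> covered"
proof -
  have "y - a1 \<notin> H 1"
    using assms(2) is_subgroup_diff_left_iff[OF is_subgroup_diff_group a1_in_H1] by blast
  then show ?thesis
    using uncovered_add_H[of 1 a1] first_block a1 assms by auto
qed

lemma uncovered_add_D:
  assumes y: "y \<notin> covered" and d: "d \<in> D"
  shows "y + d \<notin> covered"
proof (cases "y \<in> H 1")
  case True
  then have "y + d \<in> D"
    using y d is_subgroup_add[OF is_subgroup_D] D_eq by blast
  then show ?thesis
    using D_eq by blast
next
  case False
  then show ?thesis
    using uncovered_add_H1 y d D_eq by blast
qed

context
  fixes k b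
  assumes k: "k \<in> {1..m}" "k \<noteq> 1" and b: "b \<in> A k"
begin

lemma block_disjoint_H1: "x \<in> A k \<Longrightarrow> x \<notin> H 1"
  using H1_inter_covered block_subset_covered[OF k(1)] disjoint[OF k(1), of 1] first_block k(2)
  by auto

lemma A1_disjoint_coset: "x \<in> A 1 \<Longrightarrow> x - b \<notin> H k"
  using mem_block_if_coset[OF k(1) b, of x] block_subset_covered[of 1] disjoint[OF k(1), of 1]
    first_block k(2)
  by auto

lemma coset_disjoint_H1:
  assumes "\<forall>e\<in>D. e - b \<notin> H k" and "x - b \<in> H k"
  shows "x \<notin> H 1"
  using mem_block_if_coset[OF k(1) b assms(2)] block_disjoint_H1 assms D_eq by blast

text \<open>If \<open>b + H k\<close> missed \<open>D\<close>, it would miss \<open>H 1\<close>. Then either \<open>H 1 \<subseteq> H k\<close>, and \<open>H k\<close>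
  is an uncovered coset (it contains \<open>0\<close>) holding \<open>a1\<close>; or some \<open>h \<in> H 1 - H k\<close> carries an
  uncovered point of \<open>b + H k\<close> to \<open>b\<close> by alternating \<open>H 1\<close>- and \<open>H k\<close>-translations.\<close>

lemma coset_meets_D:
  assumes card: "card (A k) < card (H k)"
  shows "\<exists>e\<in>D. e - b \<in> H k"
proof (rule ccontr)
  assume "\<not> ?thesis"
  then have off_H1: "x \<notin> H 1" if "x - b \<in> H k" for x
    using coset_disjoint_H1 that by blast
  obtain e where e: "e - b \<in> H k" "e \<notin> covered"
    using coset_has_uncovered[OF k(1) b card] by blast
  show False
  proof (cases "H 1 \<subseteq> H k")
    case True
    have "0 - b \<notin> H k"
      using off_H1 is_subgroup_zero[OF is_subgroup_diff_group] by blast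
    moreover have "0 \<notin> covered"
      using zero_in_D D_eq by blast
    ultimately have "0 + a1 \<notin> covered"
      using uncovered_add_H[OF k(1) b] True a1_in_H1 by blast
    then show False
      using a1_covered by simp
  next
    case False
    then obtain h where h: "h \<in> H 1" "h \<notin> H k"
      by blast
    have "e + h \<notin> covered"
      using uncovered_add_H1 e(2) off_H1[OF e(1)] h(1) .
    moreover have "e + h - b \<notin> H k"
      using h(2) e(1) is_subgroup_diff[OF is_subgroup_diff_group, of "e + h - b" "A k" "e - b"]
      by auto
    moreover have "b - e \<in> H k"
      using is_subgroup_uminus[OF is_subgroup_diff_group e(1)] by simp
    ultimately have "e + h + (b - e) \<notin> covered"
      using uncovered_add_H[OF k(1) b] by blast
    then have "b + h \<notin> covered"
      by (simp add: algebra_simps)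
    moreover have "b + h \<notin> H 1"
      using block_disjoint_H1[OF b] is_subgroup_add_left_iff[OF is_subgroup_diff_group h(1)] by blast
    ultimately have "b + h + - h \<notin> covered"
      using uncovered_add_H1 is_subgroup_uminus[OF is_subgroup_diff_group h(1)] by blast
    then show False
      using b block_subset_covered[OF k(1)] by auto
  qed
qed

lemma D_subset_coset:
  assumes e: "e \<in> D" "e - b \<in> H k" and z: "z \<in> D"
  shows "z - b \<in> H k"
proof (rule ccontr)
  assume "z - b \<notin> H k"
  moreover have "z \<notin> covered" "b - e \<in> H k"
    using z D_eq is_subgroup_uminus[OF is_subgroup_diff_group e(2)] by auto
  ultimately have "z + (b - e) \<notin> covered"
    using uncovered_add_H[OF k(1) b] by blast
  moreover have "e - z \<in> D"
    using is_subgroup_diff[OF is_subgroup_D e(1) z] .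
  ultimately have "z + (b - e) + (e - z) \<notin> covered"
    by (rule uncovered_add_D)
  then show False
    using b block_subset_covered[OF k(1)] by auto
qed

lemma H_minus_covered_subset_D:
  assumes "b \<in> H k"
  shows "H k - covered \<subseteq> D"
proof
  fix y assume y: "y \<in> H k - covered"
  show "y \<in> D"
  proof (rule ccontr)
    assume "y \<notin> D"
    then have "y + a1 \<notin> covered"
      using y D_eq uncovered_add_H1 a1_in_H1 by blast
    moreover have "y + a1 - b \<notin> H k"
      using A1_disjoint_coset[OF a1] y is_subgroup_add_left_iff[OF is_subgroup_diff_group, of y "A k"]
      by (metis DiffD1 add.commute add_diff_eq)
    ultimately have "y + a1 + - y \<notin> covered"
      using uncovered_add_H[OF k(1) b] is_subgroup_uminus[OF is_subgroup_diff_group] y by blast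
    then show False
      using a1_covered by simp
  qed
qed

end

lemma H_minus_covered_eq_D:
  assumes k: "k \<in> {1..m}" and b: "b \<in> A k" and card: "card (A k) < card (H k)"
  shows "b \<in> H k \<and> H k - covered = D"
proof (cases "k = 1")
  case True
  then show ?thesis
    using b A1_subset_H1 D_eq by auto
next
  case False
  obtain e where "e \<in> D" "e - b \<in> H k"
    using coset_meets_D[OF k False b card] by blast
  then have to_coset: "z - b \<in> H k" if "z \<in> D" for z
    using D_subset_coset[OF k False b] that by blast
  have "b \<in> H k"
    using to_coset[OF zero_in_D] is_subgroup_uminus[OF is_subgroup_diff_group] by fastforce
  moreover have "D \<subseteq> H k"
    using to_coset is_subgroup_diff_left_iff[OF is_subgroup_diff_group \<open>b \<in> H k\<close>] by blast
  moreover have "D \<inter> covered = {}"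
    using D_eq by blast
  ultimately show ?thesis
    using H_minus_covered_subset_D[OF k False b] by blast
qed

lemma sumset_minus_covered_subset_D:
  assumes k: "k \<in> {1..m}" and b: "b \<in> A k" "b \<in> H k"
    and Hk: "H k - covered = D" and S: "S - covered \<subseteq> D"
  shows "{s + h |s h. s \<in> S \<and> h \<in> H k} - covered \<subseteq> D"
proof
  fix x assume "x \<in> {s + h |s h. s \<in> S \<and> h \<in> H k} - covered"
  then obtain s h where x: "x = s + h" "s \<in> S" "h \<in> H k" "x \<notin> covered"
    by blast
  show "x \<in> D"
  proof (rule ccontr)
    assume "x \<notin> D"
    then have "x \<notin> H k"
      using Hk x(4) by blast
    then have "x - b \<notin> H k"
      by (simp add: is_subgroup_diff_left_iff[OF is_subgroup_diff_group b(2)])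
    then have "x + - h \<notin> covered"
      using uncovered_add_H[OF k b(1)] x(3,4) is_subgroup_uminus[OF is_subgroup_diff_group] by blast
    then have "s \<in> H k"
      using S x(1,2) Hk by auto
    then show False
      using \<open>x \<notin> H k\<close> x(1,3) is_subgroup_add[OF is_subgroup_diff_group] by blast
  qed
qed

lemma subgroup_sum_minus_covered_subset_D:
  assumes "n \<le> m" and "\<And>k. k \<in> {1..n} \<Longrightarrow> A k \<noteq> {} \<and> card (A k) < card (H k)"
  shows "subgroup_sum H n - covered \<subseteq> D"
  using assms
proof (induction n)
  case 0
  then show ?case
    using zero_in_D by auto
next
  case (Suc n)
  have k: "Suc n \<in> {1..m}"
    using Suc.prems(1) by simp
  obtain b where b: "b \<in> A (Suc n)"
    using Suc.prems(2)[of "Suc n"] by auto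
  have "b \<in> H (Suc n) \<and> H (Suc n) - covered = D"
    using H_minus_covered_eq_D[OF k b] Suc.prems(2) by simp
  moreover have "subgroup_sum H n - covered \<subseteq> D"
    using Suc by simp
  ultimately show ?case
    using sumset_minus_covered_subset_D[OF k b] by simp
qed

end

theorem proposition3p7:
  fixes A :: "nat \<Rightarrow> 'a::{ab_group_add, finite} set"
    and m r :: nat and a1 :: 'a
  assumes disj: "\<forall>i\<in>{1..m}. \<forall>j\<in>{1..m}. i \<noteq> j \<longrightarrow> A i \<inter> A j = {}"
    and nonempty: "\<forall>i\<in>{1..m}. A i \<noteq> {}"
    and bim: "bimodal A m"
    and r2: "2 \<le> r" and rm: "r \<le> m"
    and label: "\<forall>i\<in>{1..m}. card (A i) < card (diff_group (A i)) \<longleftrightarrow> i \<le> r"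
    and a1: "a1 \<in> A 1"
    and canon: "is_subgroup (((+) a1 ` diff_group (A 1)) - A 1)"
  shows "subgroup_sum (\<lambda>i. diff_group (A i)) r - (((+) a1 ` diff_group (A 1)) - A 1)
           \<subseteq> (\<Union>i\<in>{1..m}. A i)"
proof -
  interpret canonical_bimodal A m a1
    using disj bim r2 rm a1 canon by unfold_locales auto
  have "subgroup_sum H r - covered \<subseteq> D"
    using rm label nonempty by (intro subgroup_sum_minus_covered_subset_D) auto
  then show ?thesis
    unfolding covered_def D_def by blast
qed

end
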